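(* Let $\mathcal{T}$ be a smooth manifold with local coordinates $(t^a)$ carrying a Riemannian metric $h_{ab}(t)$ (inverse $h^{ab}$) with Christoffel symbols $\chi^a_{bc}(t)$, and let $M$ be a smooth $n$-dimensional manifold with local coordinates $(x^i)$ carrying a semi-Riemannian metric $\varphi_{ij}(x)$ (inverse $\varphi^{ij}$) with Christoffel symbols $\gamma^k_{ij}(x)$. Let $m\neq0$, $c>0$, $e$ be real constants, $h^*_{ab}=(4mc)^{-1}h_{ab}$, and $A^{(a)}_{(i)}(t,x)$ a smooth d-tensor on $\mathcal{T}\times M$. On $E^*=J^{1*}(\mathcal{T},M)$ with coordinates $(t^a,x^i,p^a_i)$, let $\frac{\delta}{\delta t^a}=\frac{\partial}{\partial t^a}-\chi^f_{ag}p^g_r\frac{\partial}{\partial p^f_r}$, $\frac{\delta}{\delta x^i}=\frac{\partial}{\partial x^i}-\underset{2}{N}{}^{(f)}_{(r)i}\frac{\partial}{\partial p^f_r}$ with $\underset{2}{N}{}^{(f)}_{(r)i}=\gamma^s_{ri}\big[\frac{2e}{m}A^{(f)}_{(s)}-p^f_s\big]-\frac{e}{m}\big[\frac{\partial A^{(f)}_{(r)}}{\partial x^i}+\frac{\partial A^{(f)}_{(i)}}{\partial x^r}\big]$, and $\delta p^a_i=dp^a_i+\chi^a_{fg}p^g_i\,dt^f+\underset{2}{N}{}^{(a)}_{(i)r}dx^r$. Let \[ \mathbb{G}=h^*_{ab}\,dt^a\otimes dt^b+\varphi_{ij}\,dx^i\otimes dx^j+h^*_{ab}\varphi^{ij}\,\delta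 p^a_i\otimes\delta p^b_j . \] Let $D$ be the linear connection on $E^*$ defined on the adapted frame by $D_{\frac{\delta}{\delta t^c}}\frac{\delta}{\delta t^b}=\chi^a_{bc}\frac{\delta}{\delta t^a}$, $D_{\frac{\delta}{\delta t^c}}\frac{\delta}{\delta x^j}=0$, $D_{\frac{\delta}{\delta t^c}}\frac{\partial}{\partial p^f_j}=\chi^b_{fc}\frac{\partial}{\partial p^b_j}$, $D_{\frac{\delta}{\delta x^k}}\frac{\delta}{\delta t^b}=0$, $D_{\frac{\delta}{\delta x^k}}\frac{\delta}{\delta x^j}=\gamma^i_{jk}\frac{\delta}{\delta x^i}$, $D_{\frac{\delta}{\delta x^k}}\frac{\partial}{\partial p^b_s}=-\gamma^s_{ik}\frac{\partial}{\partial p^b_i}$, and $D_{\frac{\partial}{\partial p^c_k}}$ of every adapted frame vector equal to $0$; let $\mathrm{Ric}(Y,Z)=\mathrm{tr}(X\mapsto R(X,Y)Z)$ with $R(X,Y)Z=D_XD_YZ-D_YD_XZ-D_{[X,Y]}Z$, and let $\mathrm{Sc}$ be the trace of $\mathrm{Ric}$ with respect to $\mathbb{G}$. Then \[ \mathrm{Sc}=(4mc)\,\chi+\mathfrak{R}, \] where $\chi=h^{ab}\chi_{ab}$ and $\mathfrak{R}=\varphi^{ij}\mathfrak{R}_{ij}$ are the classical scalar curvatures of $h_{ab}$ and $\varphi_{ij}$ ($\chi_{ab}$, $\mathfrak{R}_{ij}$ being their Ricci tensors).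
   Context: Indices $a,b,c,d,f,g$ run from $1$ to $\dim\mathcal{T}$, indices $i,j,k,r,s$ from $1$ to $n$; Einstein summation convention. The fibre coordinates of $J^{1*}(\mathcal{T},M)$ transform as $\tilde p^a_i=\frac{\partial \tilde t^a}{\partial t^b}\frac{\partial x^j}{\partial \tilde x^i}p^b_j$. The connection $D$ is what the paper calls the generalized Cartan canonical connection $C\Gamma$ of the autonomous multi-time Hamilton space of electrodynamics, and $\mathbb{G}$ its polymomentum gravitational $h^*$-potential. *)

theory Defs
  imports "HOL-Analysis.Analysis"
begin

definition dirD :: "('a::real_normed_vector \<Rightarrow> real) \<Rightarrow> 'a \<Rightarrow> 'a \<Rightarrow> real" where
  "dirD f v z = deriv (\<lambda>s. f (z + s *\<^sub>R v)) 0"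

fun iterD :: "'a::real_normed_vector list \<Rightarrow> ('a \<Rightarrow> real) \<Rightarrow> 'a \<Rightarrow> real" where
  "iterD [] f = f"
| "iterD (v # vs) f = (\<lambda>z. dirD (iterD vs f) v z)"

definition C_inf_on :: "'a::real_normed_vector set \<Rightarrow> ('a \<Rightarrow> real) \<Rightarrow> bool" where
  "C_inf_on S f \<longleftrightarrow> (\<forall>vs. iterD vs f differentiable_on S)"

text \<open>christ g t a b c = Christoffel symbol Gamma^a_{bc} of g at t.\<close>
definition christ :: "(real^'k \<Rightarrow> real^'k^'k) \<Rightarrow> real^'k \<Rightarrow> 'k \<Rightarrow> 'k \<Rightarrow> 'k \<Rightarrow> real" where
  "christ g t a b c = (1/2) * (\<Sum>d\<in>UNIV. matrix_inv (g t) $ a $ d *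
      (dirD (\<lambda>s. g s $ d $ c) (axis b 1) t + dirD (\<lambda>s. g s $ d $ b) (axis c 1) t
       - dirD (\<lambda>s. g s $ b $ c) (axis d 1) t))"

text \<open>Components R^a_{bcd} of R(d_c,d_d)d_b for the Levi-Civita connection.\<close>
definition riem_cl :: "(real^'k \<Rightarrow> real^'k^'k) \<Rightarrow> real^'k \<Rightarrow> 'k \<Rightarrow> 'k \<Rightarrow> 'k \<Rightarrow> 'k \<Rightarrow> real" where
  "riem_cl g t a b c d =
     dirD (\<lambda>s. christ g s a b d) (axis c 1) t - dirD (\<lambda>s. christ g s a b c) (axis d 1) t
     + (\<Sum>e\<in>UNIV. christ g t e b d * christ g t a e c - christ g t e b c * christ g t a e d)"

text \<open>Ricci tensor Ric(d_d, d_b) = tr(X -> R(X,d_d)d_b).\<close>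
definition ricci_cl :: "(real^'k \<Rightarrow> real^'k^'k) \<Rightarrow> real^'k \<Rightarrow> 'k \<Rightarrow> 'k \<Rightarrow> real" where
  "ricci_cl g t d b = (\<Sum>c\<in>UNIV. riem_cl g t c b c d)"

definition scal_cl :: "(real^'k \<Rightarrow> real^'k^'k) \<Rightarrow> real^'k \<Rightarrow> real" where
  "scal_cl g t = (\<Sum>b\<in>UNIV. \<Sum>d\<in>UNIV. matrix_inv (g t) $ b $ d * ricci_cl g t d b)"

text \<open>Index type for coordinates and for the adapted frame:
  FT a ~ t^a,  FX i ~ x^i,  FP a i ~ p^a_i.\<close>
datatype ('p, 'n) fidx = FT 'p | FX 'n | FP 'p 'n

instance fidx :: (finite, finite) finite
proof
  have "(UNIV :: ('a,'b) fidx set) \<subseteq> range FT \<union> range FX \<union> (\<lambda>(a, i). FP a i) ` UNIV"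
  proof
    fix x :: "('a,'b) fidx"
    show "x \<in> range FT \<union> range FX \<union> (\<lambda>(a, i). FP a i) ` UNIV"
      by (cases x) auto
  qed
  then show "finite (UNIV :: ('a,'b) fidx set)"
    by (rule finite_subset) auto
qed

text \<open>A point (t, x, P) with P $ a $ i = p^a_i.\<close>
type_synonym ('p, 'n) pt = "(real^'p) \<times> (real^'n) \<times> (real^'n^'p)"

fun cvec :: "('p::finite, 'n::finite) fidx \<Rightarrow> ('p, 'n) pt" where
  "cvec (FT a) = (axis a 1, 0, 0)"
| "cvec (FX i) = (0, axis i 1, 0)"
| "cvec (FP a i) = (0, 0, axis a (axis i 1))"

definition pdE :: "('p::finite, 'n::finite) fidx \<Rightarrow> (('p, 'n) pt \<Rightarrow> real) \<Rightarrow> ('p, 'n) pt \<Rightarrow> real" where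
  "pdE k F z = dirD F (cvec k) z"

text \<open>N2 f r i z = N^{(f)}_{(r)i}.\<close>
definition N2 :: "(real^'n \<Rightarrow> real^'n^'n) \<Rightarrow> (real^'p \<Rightarrow> real^'n \<Rightarrow> real^'n^'p) \<Rightarrow> real \<Rightarrow> real
    \<Rightarrow> 'p::finite \<Rightarrow> 'n::finite \<Rightarrow> 'n \<Rightarrow> ('p, 'n) pt \<Rightarrow> real" where
  "N2 \<phi> A e m f r i z =
     (let t = fst z; x = fst (snd z); P = snd (snd z) in
       (\<Sum>s\<in>UNIV. christ \<phi> x s r i * (2 * e / m * A t x $ f $ s - P $ f $ s))
       - e / m * (dirD (\<lambda>y. A t y $ f $ r) (axis i 1) x + dirD (\<lambda>y. A t y $ f $ i) (axis r 1) x))"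

text \<open>frameE ... beta k z = k-th coordinate component of the adapted frame vector e_beta
  (delta/delta t^a, delta/delta x^i, d/d p^a_i).\<close>
definition frameE :: "(real^'p \<Rightarrow> real^'p^'p) \<Rightarrow> (real^'n \<Rightarrow> real^'n^'n) \<Rightarrow> (real^'p \<Rightarrow> real^'n \<Rightarrow> real^'n^'p)
    \<Rightarrow> real \<Rightarrow> real \<Rightarrow> ('p::finite, 'n::finite) fidx \<Rightarrow> ('p, 'n) fidx \<Rightarrow> ('p, 'n) pt \<Rightarrow> real" where
  "frameE h \<phi> A e m \<beta> k z =
     (let t = fst z; P = snd (snd z) in
      (case \<beta> of
         FT a \<Rightarrow> (case k of FT b \<Rightarrow> (if a = b then 1 else 0) | FX _ \<Rightarrow> 0
                   | FP f r \<Rightarrow> - (\<Sum>g\<in>UNIV. christ h t f a g * P $ g $ r))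
       | FX i \<Rightarrow> (case k of FT _ \<Rightarrow> 0 | FX j \<Rightarrow> (if i = j then 1 else 0)
                   | FP f r \<Rightarrow> - N2 \<phi> A e m f r i z)
       | FP a i \<Rightarrow> (case k of FP b j \<Rightarrow> (if a = b \<and> i = j then 1 else 0) | FT _ \<Rightarrow> 0 | FX _ \<Rightarrow> 0)))"

text \<open>coframe ... alpha k z = component on dz^k of the adapted coframe (dt^a, dx^i, delta p^a_i).\<close>
definition coframe :: "(real^'p \<Rightarrow> real^'p^'p) \<Rightarrow> (real^'n \<Rightarrow> real^'n^'n) \<Rightarrow> (real^'p \<Rightarrow> real^'n \<Rightarrow> real^'n^'p)
    \<Rightarrow> real \<Rightarrow> real \<Rightarrow> ('p::finite, 'n::finite) fidx \<Rightarrow> ('p, 'n) fidx \<Rightarrow> ('p, 'n) pt \<Rightarrow> real" where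
  "coframe h \<phi> A e m \<alpha> k z =
     (let t = fst z; P = snd (snd z) in
      (case \<alpha> of
         FT a \<Rightarrow> (case k of FT b \<Rightarrow> (if a = b then 1 else 0) | FX _ \<Rightarrow> 0 | FP _ _ \<Rightarrow> 0)
       | FX i \<Rightarrow> (case k of FX j \<Rightarrow> (if i = j then 1 else 0) | FT _ \<Rightarrow> 0 | FP _ _ \<Rightarrow> 0)
       | FP a i \<Rightarrow> (case k of FT f \<Rightarrow> (\<Sum>g\<in>UNIV. christ h t a f g * P $ g $ i)
                   | FX r \<Rightarrow> N2 \<phi> A e m a i r z
                   | FP b j \<Rightarrow> (if a = b \<and> i = j then 1 else 0))))"

definition frameD :: "(real^'p \<Rightarrow> real^'p^'p) \<Rightarrow> (real^'n \<Rightarrow> real^'n^'n) \<Rightarrow> (real^'p \<Rightarrow> real^'n \<Rightarrow> real^'n^'p)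
    \<Rightarrow> real \<Rightarrow> real \<Rightarrow> ('p::finite, 'n::finite) fidx \<Rightarrow> (('p, 'n) pt \<Rightarrow> real) \<Rightarrow> ('p, 'n) pt \<Rightarrow> real" where
  "frameD h \<phi> A e m \<beta> F z = (\<Sum>k\<in>UNIV. frameE h \<phi> A e m \<beta> k z * pdE k F z)"

text \<open>conn ... alpha beta gamma z = coefficient of e_alpha in D_{e_gamma} e_beta (the connection D).\<close>
definition conn :: "(real^'p \<Rightarrow> real^'p^'p) \<Rightarrow> (real^'n \<Rightarrow> real^'n^'n)
    \<Rightarrow> ('p::finite, 'n::finite) fidx \<Rightarrow> ('p, 'n) fidx \<Rightarrow> ('p, 'n) fidx \<Rightarrow> ('p, 'n) pt \<Rightarrow> real" where
  "conn h \<phi> \<alpha> \<beta> \<gamma> z =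
     (let t = fst z; x = fst (snd z) in
      (case \<gamma> of
         FT c \<Rightarrow> (case \<beta> of
                    FT b \<Rightarrow> (case \<alpha> of FT a \<Rightarrow> christ h t a b c | FX _ \<Rightarrow> 0 | FP _ _ \<Rightarrow> 0)
                  | FX _ \<Rightarrow> 0
                  | FP f j \<Rightarrow> (case \<alpha> of FP b j' \<Rightarrow> (if j = j' then christ h t b f c else 0)
                                | FT _ \<Rightarrow> 0 | FX _ \<Rightarrow> 0))
       | FX k \<Rightarrow> (case \<beta> of
                    FT _ \<Rightarrow> 0
                  | FX j \<Rightarrow> (case \<alpha> of FX i \<Rightarrow> christ \<phi> x i j k | FT _ \<Rightarrow> 0 | FP _ _ \<Rightarrow> 0)
                  | FP b s \<Rightarrow> (case \<alpha> of FP b' i \<Rightarrow> (if b = b' then - christ \<phi> x s i k else 0)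
                                | FT _ \<Rightarrow> 0 | FX _ \<Rightarrow> 0))
       | FP _ _ \<Rightarrow> 0))"

text \<open>[e_gamma, e_delta] = sum_eps brk eps gamma delta * e_eps.\<close>
definition brk :: "(real^'p \<Rightarrow> real^'p^'p) \<Rightarrow> (real^'n \<Rightarrow> real^'n^'n) \<Rightarrow> (real^'p \<Rightarrow> real^'n \<Rightarrow> real^'n^'p)
    \<Rightarrow> real \<Rightarrow> real \<Rightarrow> ('p::finite, 'n::finite) fidx \<Rightarrow> ('p, 'n) fidx \<Rightarrow> ('p, 'n) fidx \<Rightarrow> ('p, 'n) pt \<Rightarrow> real" where
  "brk h \<phi> A e m \<epsilon> \<gamma> \<delta> z = (\<Sum>k\<in>UNIV. coframe h \<phi> A e m \<epsilon> k z *
      (frameD h \<phi> A e m \<gamma> (\<lambda>w. frameE h \<phi> A e m \<delta> k w) z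
       - frameD h \<phi> A e m \<delta> (\<lambda>w. frameE h \<phi> A e m \<gamma> k w) z))"

text \<open>curvR ... alpha beta gamma delta z = e_alpha-component of
  R(e_gamma,e_delta)e_beta = D_gamma D_delta e_beta - D_delta D_gamma e_beta - D_[e_gamma,e_delta] e_beta.\<close>
definition curvR :: "(real^'p \<Rightarrow> real^'p^'p) \<Rightarrow> (real^'n \<Rightarrow> real^'n^'n) \<Rightarrow> (real^'p \<Rightarrow> real^'n \<Rightarrow> real^'n^'p)
    \<Rightarrow> real \<Rightarrow> real \<Rightarrow> ('p::finite, 'n::finite) fidx \<Rightarrow> ('p, 'n) fidx \<Rightarrow> ('p, 'n) fidx \<Rightarrow> ('p, 'n) fidx
    \<Rightarrow> ('p, 'n) pt \<Rightarrow> real" where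
  "curvR h \<phi> A e m \<alpha> \<beta> \<gamma> \<delta> z =
     frameD h \<phi> A e m \<gamma> (conn h \<phi> \<alpha> \<beta> \<delta>) z - frameD h \<phi> A e m \<delta> (conn h \<phi> \<alpha> \<beta> \<gamma>) z
     + (\<Sum>\<epsilon>\<in>UNIV. conn h \<phi> \<epsilon> \<beta> \<delta> z * conn h \<phi> \<alpha> \<epsilon> \<gamma> z - conn h \<phi> \<epsilon> \<beta> \<gamma> z * conn h \<phi> \<alpha> \<epsilon> \<delta> z)
     - (\<Sum>\<epsilon>\<in>UNIV. brk h \<phi> A e m \<epsilon> \<gamma> \<delta> z * conn h \<phi> \<alpha> \<beta> \<epsilon> z)"

text \<open>Ric(e_delta, e_beta) = tr(X -> R(X, e_delta) e_beta).\<close>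
definition ricE :: "(real^'p \<Rightarrow> real^'p^'p) \<Rightarrow> (real^'n \<Rightarrow> real^'n^'n) \<Rightarrow> (real^'p \<Rightarrow> real^'n \<Rightarrow> real^'n^'p)
    \<Rightarrow> real \<Rightarrow> real \<Rightarrow> ('p::finite, 'n::finite) fidx \<Rightarrow> ('p, 'n) fidx \<Rightarrow> ('p, 'n) pt \<Rightarrow> real" where
  "ricE h \<phi> A e m \<delta> \<beta> z = (\<Sum>\<gamma>\<in>UNIV. curvR h \<phi> A e m \<gamma> \<beta> \<gamma> \<delta> z)"

text \<open>Components of the gravitational h*-potential G in the adapted frame, h*_{ab} = h_{ab}/(4mc).\<close>
definition Gmat :: "(real^'p \<Rightarrow> real^'p^'p) \<Rightarrow> (real^'n \<Rightarrow> real^'n^'n) \<Rightarrow> real \<Rightarrow> real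
    \<Rightarrow> ('p::finite, 'n::finite) pt \<Rightarrow> real^('p, 'n) fidx^('p, 'n) fidx" where
  "Gmat h \<phi> m c z =
     (let t = fst z; x = fst (snd z) in
      (\<chi> \<alpha> \<beta>. (case (\<alpha>, \<beta>) of
          (FT a, FT b) \<Rightarrow> h t $ a $ b / (4 * m * c)
        | (FX i, FX j) \<Rightarrow> \<phi> x $ i $ j
        | (FP a i, FP b j) \<Rightarrow> h t $ a $ b / (4 * m * c) * matrix_inv (\<phi> x) $ i $ j
        | _ \<Rightarrow> 0)))"

definition scalE :: "(real^'p \<Rightarrow> real^'p^'p) \<Rightarrow> (real^'n \<Rightarrow> real^'n^'n) \<Rightarrow> (real^'p \<Rightarrow> real^'n \<Rightarrow> real^'n^'p)
    \<Rightarrow> real \<Rightarrow> real \<Rightarrow> real \<Rightarrow> ('p::finite, 'n::finite) pt \<Rightarrow> real" where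
  "scalE h \<phi> A e m c z = (\<Sum>\<beta>\<in>UNIV. \<Sum>\<delta>\<in>UNIV.
      matrix_inv (Gmat h \<phi> m c z) $ \<beta> $ \<delta> * ricE h \<phi> A e m \<delta> \<beta> z)"

end

theory Submission imports Defs begin

text \<open>In the adapted frame the coefficients of \<open>D\<close> do not depend on the momenta, vanish
  whenever the differentiating direction is vertical, and split into a \<open>t\<close>-block built from the
  Christoffel symbols of \<open>h\<close> and an \<open>x\<close>-block built from those of \<open>\<phi>\<close>; brackets of
  adapted frame fields are vertical. Hence the Ricci tensor of \<open>D\<close> restricts to the Ricci
  tensors of \<open>h\<close> and \<open>\<phi>\<close> on the horizontal blocks and vanishes on the vertical block. As
  \<open>G\<close> is block-diagonal with \<open>t\<close>-block \<open>h/(4mc)\<close>, tracing puts the factor \<open>4mc\<close> in front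
  of the scalar curvature of \<open>h\<close>.\<close>

lemma sum_UNIV_fidx:
  fixes g :: "('p::finite, 'n::finite) fidx \<Rightarrow> 'b::comm_monoid_add"
  shows "sum g UNIV = (\<Sum>a\<in>UNIV. g (FT a)) + (\<Sum>i\<in>UNIV. g (FX i)) + (\<Sum>a\<in>UNIV. \<Sum>i\<in>UNIV. g (FP a i))"
proof -
  have UNIV_eq: "(UNIV :: ('p, 'n) fidx set) = range FT \<union> range FX \<union> case_prod FP ` UNIV"
  proof (rule set_eqI)
    fix x :: "('p, 'n) fidx"
    show "x \<in> UNIV \<longleftrightarrow> x \<in> range FT \<union> range FX \<union> case_prod FP ` UNIV"
      by (cases x) auto
  qed
  have "sum g UNIV = sum g (range FT) + sum g (range FX) + sum g (case_prod FP ` UNIV)"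
    unfolding UNIV_eq by (subst sum.union_disjoint; auto)+
  also have "sum g (range FT) = (\<Sum>a\<in>UNIV. g (FT a))"
    by (subst sum.reindex) (auto intro: injI)
  also have "sum g (range FX) = (\<Sum>i\<in>UNIV. g (FX i))"
    by (subst sum.reindex) (auto intro: injI)
  also have "sum g (case_prod FP ` UNIV) = (\<Sum>(a, i)\<in>UNIV. g (FP a i))"
    by (subst sum.reindex) (auto intro!: inj_onI simp: case_prod_beta)
  also have "\<dots> = (\<Sum>a\<in>UNIV. \<Sum>i\<in>UNIV. g (FP a i))"
    by (simp add: sum.cartesian_product[symmetric] UNIV_Times_UNIV[symmetric] del: UNIV_Times_UNIV)
  finally show ?thesis .
qed

lemma matrix_inv_invertible:
  fixes A :: "'a::semiring_1^'n^'n"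
  assumes "invertible A"
  shows "A ** matrix_inv A = mat 1" "matrix_inv A ** A = mat 1"
  using someI_ex[OF assms[unfolded invertible_def]] unfolding matrix_inv_def by auto

lemma matrix_inv_unique:
  fixes A B :: "real^'n^'n"
  assumes "A ** B = mat 1"
  shows "matrix_inv A = B"
proof -
  have BA: "B ** A = mat 1"
    using assms matrix_left_right_inverse by blast
  then have "invertible A"
    using invertible_left_inverse by blast
  have "matrix_inv A = (B ** A) ** matrix_inv A"
    by (simp add: BA)
  also have "\<dots> = B"
    by (simp add: matrix_mul_assoc[symmetric] matrix_inv_invertible(1)[OF \<open>invertible A\<close>])
  finally show ?thesis .
qed

lemma invertible_if_pos_def:
  fixes H :: "real^'n^'n"
  assumes "\<forall>v. v \<noteq> 0 \<longrightarrow> v \<bullet> (H *v v) > 0"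
  shows "invertible H"
proof -
  have "\<forall>x. H *v x = 0 \<longrightarrow> x = 0"
    using assms by (metis inner_zero_right less_irrefl)
  then show ?thesis
    using matrix_left_invertible_ker invertible_left_inverse by blast
qed

lemma matrix_mul_eq_mat1_entry:
  fixes A B :: "'a::semiring_1^'n^'n"
  assumes "A ** B = mat 1"
  shows "(\<Sum>d\<in>UNIV. A $ a $ d * B $ d $ b) = (if a = b then 1 else 0)"
  using arg_cong[OF assms, of "\<lambda>M. M $ a $ b"] by (simp add: matrix_matrix_mult_def mat_def)

lemma dirD_const [simp]: "dirD (\<lambda>_. c) v z = 0"
  by (simp add: dirD_def)

lemma pdE_momentum_indep:
  assumes "\<forall>t x P. F (t, x, P) = G t x"
  shows "pdE (FT b) F (t, x, P) = dirD (\<lambda>s. G s x) (axis b 1) t"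
    and "pdE (FX j) F (t, x, P) = dirD (G t) (axis j 1) x"
    and "pdE (FP a i) F (t, x, P) = 0"
  using assms by (simp_all add: pdE_def dirD_def)

lemma frameD_momentum_indep:
  assumes "\<forall>t x P. F (t, x, P) = G t x"
  shows "frameD h \<phi> A e m (FT c) F (t, x, P) = dirD (\<lambda>s. G s x) (axis c 1) t"
    and "frameD h \<phi> A e m (FX k) F (t, x, P) = dirD (G t) (axis k 1) x"
    and "frameD h \<phi> A e m (FP a i) F (t, x, P) = 0"
  by (simp_all add: frameD_def sum_UNIV_fidx pdE_momentum_indep[OF assms] frameE_def
      if_distrib[of "\<lambda>z. z * _"] cong: if_cong)

lemma conn_momentum_indep: "\<forall>t x P. conn h \<phi> \<alpha> \<beta> \<delta> (t, x, P) = conn h \<phi> \<alpha> \<beta> \<delta> (t, x, 0)"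
  by (simp add: conn_def)

lemma frameD_conn:
  "frameD h \<phi> A e m (FT c) (conn h \<phi> \<alpha> \<beta> \<delta>) (t, x, P) = dirD (\<lambda>s. conn h \<phi> \<alpha> \<beta> \<delta> (s, x, 0)) (axis c 1) t"
  "frameD h \<phi> A e m (FX k) (conn h \<phi> \<alpha> \<beta> \<delta>) (t, x, P) = dirD (\<lambda>y. conn h \<phi> \<alpha> \<beta> \<delta> (t, y, 0)) (axis k 1) x"
  "frameD h \<phi> A e m (FP a i) (conn h \<phi> \<alpha> \<beta> \<delta>) (t, x, P) = 0"
  by (rule frameD_momentum_indep[OF conn_momentum_indep])+

lemma frameE_FT:
  "frameE h \<phi> A e m \<delta> (FT a) = (\<lambda>w. case \<delta> of FT b \<Rightarrow> if b = a then 1 else 0 | _ \<Rightarrow> 0)"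
  by (cases \<delta>) (simp_all add: frameE_def fun_eq_iff)

lemma frameE_FX:
  "frameE h \<phi> A e m \<delta> (FX i) = (\<lambda>w. case \<delta> of FX j \<Rightarrow> if j = i then 1 else 0 | _ \<Rightarrow> 0)"
  by (cases \<delta>) (simp_all add: frameE_def fun_eq_iff)

lemma brk_FT: "brk h \<phi> A e m (FT a) \<gamma> \<delta> z = 0"
  and brk_FX: "brk h \<phi> A e m (FX i) \<gamma> \<delta> z = 0"
  by (simp_all add: brk_def frameD_def pdE_def sum_UNIV_fidx coframe_def frameE_FT frameE_FX Let_def)

text \<open>The bracket of two adapted frame fields is vertical, while no connection coefficient
  has a vertical lower index, so the bracket term of the curvature vanishes.\<close>
lemma sum_brk_conn_eq_0: "(\<Sum>\<epsilon>\<in>UNIV. brk h \<phi> A e m \<epsilon> \<gamma> \<delta> z * conn h \<phi> \<alpha> \<beta> \<epsilon> z) = 0"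
  by (simp add: sum_UNIV_fidx brk_FT brk_FX conn_def Let_def)

lemma ricE_FT_FT: "ricE h \<phi> A e m (FT d) (FT b) (t, x, P) = ricci_cl h t d b"
  unfolding ricE_def curvR_def sum_brk_conn_eq_0 ricci_cl_def riem_cl_def
  by (simp add: sum_UNIV_fidx frameD_conn conn_def Let_def)

lemma ricE_FX_FX: "ricE h \<phi> A e m (FX d) (FX b) (t, x, P) = ricci_cl \<phi> x d b"
  unfolding ricE_def curvR_def sum_brk_conn_eq_0 ricci_cl_def riem_cl_def
  by (simp add: sum_UNIV_fidx frameD_conn conn_def Let_def)

lemma ricE_FP_FP: "ricE h \<phi> A e m (FP g l) (FP f j) (t, x, P) = 0"
  unfolding ricE_def curvR_def sum_brk_conn_eq_0
  by (simp add: sum_UNIV_fidx frameD_conn conn_def Let_def)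

definition Gmat_inverse :: "(real^'p \<Rightarrow> real^'p^'p) \<Rightarrow> (real^'n \<Rightarrow> real^'n^'n) \<Rightarrow> real \<Rightarrow> real
    \<Rightarrow> ('p::finite, 'n::finite) pt \<Rightarrow> real^('p, 'n) fidx^('p, 'n) fidx" where
  "Gmat_inverse h \<phi> m c z =
     (let t = fst z; x = fst (snd z) in
      (\<chi> \<alpha> \<beta>. (case (\<alpha>, \<beta>) of
          (FT a, FT b) \<Rightarrow> (4 * m * c) * matrix_inv (h t) $ a $ b
        | (FX i, FX j) \<Rightarrow> matrix_inv (\<phi> x) $ i $ j
        | (FP a i, FP b j) \<Rightarrow> (4 * m * c) * matrix_inv (h t) $ a $ b * \<phi> x $ i $ j
        | _ \<Rightarrow> 0)))"

lemma matrix_inv_Gmat: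
  assumes "invertible (h t)" and "invertible (\<phi> x)" and "4 * m * c \<noteq> (0::real)"
  shows "matrix_inv (Gmat h \<phi> m c (t, x, P)) = Gmat_inverse h \<phi> m c (t, x, P)"
proof (rule matrix_inv_unique)
  note h_inv = matrix_mul_eq_mat1_entry[OF matrix_inv_invertible(1)[OF assms(1)]]
  note \<phi>_inv = matrix_mul_eq_mat1_entry[OF matrix_inv_invertible(1)[OF assms(2)]]
    matrix_mul_eq_mat1_entry[OF matrix_inv_invertible(2)[OF assms(2)]]
  have vertical_block: "(\<Sum>g\<in>UNIV. \<Sum>l\<in>UNIV.
        h t $ a $ g * (matrix_inv (\<phi> x) $ i $ l * (matrix_inv (h t) $ g $ b * \<phi> x $ l $ j)))
      = (if a = b \<and> i = j then 1 else 0)" for a b i j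
  proof -
    have "(\<Sum>g\<in>UNIV. \<Sum>l\<in>UNIV.
        h t $ a $ g * (matrix_inv (\<phi> x) $ i $ l * (matrix_inv (h t) $ g $ b * \<phi> x $ l $ j)))
       = (\<Sum>g\<in>UNIV. h t $ a $ g * matrix_inv (h t) $ g $ b)
         * (\<Sum>l\<in>UNIV. matrix_inv (\<phi> x) $ i $ l * \<phi> x $ l $ j)"
      unfolding sum_product by (intro sum.cong refl) (auto simp: ac_simps)
    then show ?thesis
      using h_inv \<phi>_inv by simp
  qed
  show "Gmat h \<phi> m c (t, x, P) ** Gmat_inverse h \<phi> m c (t, x, P) = mat 1"
    unfolding vec_eq_iff
  proof (intro allI)
    fix \<alpha> \<beta> :: "('a, 'b) fidx"
    show "(Gmat h \<phi> m c (t, x, P) ** Gmat_inverse h \<phi> m c (t, x, P)) $ \<alpha> $ \<beta> = mat 1 $ \<alpha> $ \<beta>"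
      unfolding matrix_matrix_mult_def mat_def Gmat_def Gmat_inverse_def Let_def
      using assms(3) by (cases \<alpha>; cases \<beta>) (simp_all add: sum_UNIV_fidx h_inv \<phi>_inv vertical_block)
  qed
qed

theorem mainTheorem4:
  fixes h :: "real^'p::finite \<Rightarrow> real^'p^'p"
    and \<phi> :: "real^'n::finite \<Rightarrow> real^'n^'n"
    and A :: "real^'p \<Rightarrow> real^'n \<Rightarrow> real^'n^'p"
    and m c e :: real
    and U :: "(real^'p) set" and V :: "(real^'n) set"
  assumes "open U" and "open V"
    and "m \<noteq> 0" and "c > 0"
    and "\<forall>t\<in>U. \<forall>a b. h t $ a $ b = h t $ b $ a"
    and "\<forall>t\<in>U. \<forall>v. v \<noteq> 0 \<longrightarrow> v \<bullet> (h t *v v) > 0"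
    and "\<forall>x\<in>V. \<forall>i j. \<phi> x $ i $ j = \<phi> x $ j $ i"
    and "\<forall>x\<in>V. invertible (\<phi> x)"
    and "\<forall>a b. C_inf_on U (\<lambda>t. h t $ a $ b)"
    and "\<forall>i j. C_inf_on V (\<lambda>x. \<phi> x $ i $ j)"
    and "\<forall>f i. C_inf_on (U \<times> V) (\<lambda>(t, x). A t x $ f $ i)"
  shows "\<forall>t\<in>U. \<forall>x\<in>V. \<forall>P.
           scalE h \<phi> A e m c (t, x, P) = (4 * m * c) * scal_cl h t + scal_cl \<phi> x"
proof (intro ballI allI)
  fix t x P
  assume "t \<in> U" and "x \<in> V"
  have "invertible (h t)"
    using invertible_if_pos_def assms(6) \<open>t \<in> U\<close> by blast
  moreover have "invertible (\<phi> x)"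
    using assms(8) \<open>x \<in> V\<close> by blast
  moreover have "4 * m * c \<noteq> 0"
    using assms(3,4) by simp
  ultimately show "scalE h \<phi> A e m c (t, x, P) = (4 * m * c) * scal_cl h t + scal_cl \<phi> x"
    by (simp add: scalE_def matrix_inv_Gmat Gmat_inverse_def Let_def sum_UNIV_fidx
        ricE_FT_FT ricE_FX_FX ricE_FP_FP scal_cl_def sum_distrib_left mult.assoc)
qed

end
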